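(* Let $r\ge 1$ and suppose $(\boldsymbol\lambda,\mathbf{s})\in\mathcal{A}_e^r$ is not a Rouquier multipartition. Then $\Psi_r(\boldsymbol\lambda,\mathbf{s})\in\mathcal{A}_e$ is not an $r$-Rouquier partition.
   Context: Fix an integer $e\ge 2$. A partition is a weakly decreasing sequence $\lambda=(\lambda_1,\lambda_2,\dots)$ of non-negative integers with finite sum $|\lambda|$; $\Lambda$ denotes the set of partitions and $\Lambda^{(m)}$ the set of $m$-multipartitions, i.e. $m$-tuples $\boldsymbol\lambda=(\lambda^{(1)},\dots,\lambda^{(m)})$ of partitions. A $\beta$-set is a subset $B\subseteq\mathbb{Z}$ containing all sufficiently small integers and no sufficiently large ones. For $\lambda\in\Lambda$ and $s\in\mathbb{Z}$ set $B_s(\lambda)=\{\lambda_i-i+s : i\ge 1\}$; every $\beta$-set equals $B_s(\lambda)$ for a unique pair $(\lambda,s)$. Let $\mathcal{A}_e=\Lambda\times\mathbb{Z}$ (abacus configurations with $e$ runners) and $\mathcal{A}_e^m=\Lambda^{(m)}\times\mathbb{Z}^m$, where $(\boldsymbol\lambda,\mathbf{s})$ is identified with the $m$-tuple of $\beta$-sets $(B_{s_1}(\lambda^{(1)}),\dots,B_{s_m}(\lambda^{(m)}))$. The map $\eta$: for $(\lambda,s)\in\mathcal{A}_e$ with $B=B_s(\lambda)$ and $0\le i<e$, the set $C_i=\{(b-i)/e : b\in B,\ b\equiv i \bmod e\}$ is a $\beta$-set, so $C_i=B_{t_i}(\rho_i)$ for a unique $(\rho_i,t_i)\in\Lambda\times\mathbb{Z}$;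 set $\eta(\lambda,s)=((\rho_0,\dots,\rho_{e-1}),(t_0,\dots,t_{e-1}))$. The $e$-weight of $\lambda$ is $\mathrm{wt}(\lambda)=\sum_i|\rho_i|$. Rouquier: $(\lambda,s)\in\mathcal{A}_e$ with $\eta(\lambda,s)=(\boldsymbol\rho,\mathbf{t})$ is a Rouquier partition if $\mathrm{wt}(\lambda)\le t_{i+1}-t_i+1$ for all $0\le i<e-1$, and an $r$-Rouquier partition if $\mathrm{wt}(\lambda)\le t_{i+1}-t_i+r$ for all $0\le i<e-1$. $(\boldsymbol\lambda,\mathbf{s})\in\mathcal{A}_e^r$ is a Rouquier multipartition if $(\lambda^{(k)},s_k)$ is a Rouquier partition for every $1\le k\le r$. Uglov's map: for $1\le k\le r$ define $\psi_k:\mathbb{Z}\to\mathbb{Z}$ by $\psi_k(ae+i)=((a+1)r-k)e+i$ for $a\in\mathbb{Z}$, $0\le i<e$. For $(\boldsymbol\lambda,\mathbf{s})\in\mathcal{A}_e^r$ the set $B=\bigsqcup_{k=1}^r\psi_k(B_{s_k}(\lambda^{(k)}))$ is a $\beta$-set, and $\Psi_r(\boldsymbol\lambda,\mathbf{s})$ is the unique $(\tilde\lambda,\tilde s)\in\mathcal{A}_e$ with $B_{\tilde s}(\tilde\lambda)=B$. *)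

theory Defs
  imports Main
begin

(* A partition is represented by the list of its nonzero parts, weakly decreasing.
   Part lambda_i (i >= 1) is the (i-1)-th list entry, or 0 beyond the length. *)
definition is_partition :: "nat list \<Rightarrow> bool" where
  "is_partition lam \<longleftrightarrow> sorted_wrt (\<ge>) lam \<and> 0 \<notin> set lam"

definition part :: "nat list \<Rightarrow> nat \<Rightarrow> nat" where
  "part lam i = (if 1 \<le> i \<and> i \<le> length lam then lam ! (i - 1) else 0)"

definition size_part :: "nat list \<Rightarrow> nat" where
  "size_part lam = sum_list lam"

definition beta_set :: "nat list \<Rightarrow> int \<Rightarrow> int set" where
  "beta_set lam s = {int (part lam i) - int i + s | i. 1 \<le> i}"

definition is_beta_set :: "int set \<Rightarrow> bool" where
  "is_beta_set B \<longleftrightarrow> (\<exists>n. \<forall>b\<le>n. b \<in> B) \<and> (\<exists>n. \<forall>b\<ge>n. b \<notin> B)"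

definition config_of :: "int set \<Rightarrow> nat list \<times> int" where
  "config_of B = (THE p. is_partition (fst p) \<and> beta_set (fst p) (snd p) = B)"

definition runner :: "int \<Rightarrow> int set \<Rightarrow> int \<Rightarrow> int set" where
  "runner e B i = {(b - i) div e | b. b \<in> B \<and> b mod e = i}"

definition eta :: "int \<Rightarrow> nat list \<Rightarrow> int \<Rightarrow> nat \<Rightarrow> nat list \<times> int" where
  "eta e lam s i = config_of (runner e (beta_set lam s) (int i))"

definition weight :: "int \<Rightarrow> nat list \<Rightarrow> int \<Rightarrow> nat" where
  "weight e lam s = (\<Sum>i<nat e. size_part (fst (eta e lam s i)))"

definition r_rouquier :: "int \<Rightarrow> int \<Rightarrow> nat list \<Rightarrow> int \<Rightarrow> bool" where
  "r_rouquier e r lam s \<longleftrightarrow>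
     (\<forall>i. i + 1 < nat e \<longrightarrow>
        int (weight e lam s) \<le> snd (eta e lam s (i + 1)) - snd (eta e lam s i) + r)"

definition rouquier :: "int \<Rightarrow> nat list \<Rightarrow> int \<Rightarrow> bool" where
  "rouquier e lam s \<longleftrightarrow> r_rouquier e 1 lam s"

definition rouquier_multi :: "int \<Rightarrow> nat \<Rightarrow> (nat \<Rightarrow> nat list) \<Rightarrow> (nat \<Rightarrow> int) \<Rightarrow> bool" where
  "rouquier_multi e r lam s \<longleftrightarrow> (\<forall>k\<in>{1..r}. rouquier e (lam k) (s k))"

(* Uglov's psi_k(a e + i) = ((a+1) r - k) e + i *)
definition uglov_psi :: "int \<Rightarrow> nat \<Rightarrow> nat \<Rightarrow> int \<Rightarrow> int" where
  "uglov_psi e r k b = ((b div e + 1) * int r - int k) * e + b mod e"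

definition Uglov_Psi :: "int \<Rightarrow> nat \<Rightarrow> (nat \<Rightarrow> nat list) \<Rightarrow> (nat \<Rightarrow> int) \<Rightarrow> nat list \<times> int" where
  "Uglov_Psi e r lam s = config_of (\<Union>k\<in>{1..r}. uglov_psi e r k ` beta_set (lam k) (s k))"

end

theory Submission
  imports Defs
begin

text \<open>
  On runner \<open>i\<close>, Uglov's map interleaves the runners \<open>i\<close> of the \<open>r\<close> components: bead \<open>c\<close> of
  component \<open>k\<close> goes to position \<open>(c + 1) r - k\<close>. Charges add up under interleaving, because a
  charge can be read off by counting beads above and gaps below a cut point. The size of a
  partition counts the pairs (bead, gap below it) of its \<open>\<beta>\<close>-set; in an interleaving, the pairs
  inside component \<open>k\<close> contribute \<open>|\<rho>\<^sub>k|\<close>, and those between components \<open>j\<close> and \<open>k\<close>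
  contribute \<open>|\<rho>\<^sub>j| + |\<rho>\<^sub>k| + d (d + 1) / 2\<close> with \<open>d\<close> the difference of charges. Summing
  over the runners, the weight of \<open>\<Psi>\<^sub>r(\<lambda>, s)\<close> is at least \<open>r\<close> times the weight of component \<open>k\<close>
  plus these quadratic terms in the charge differences. If component \<open>k\<close> violates the Rouquier
  condition at runners \<open>i, i + 1\<close>, the estimate \<open>z (z + 1) + w (w + 1) \<ge> 2 (w - z) - 2\<close> applied
  to these two runners makes the weight of \<open>\<Psi>\<^sub>r(\<lambda>, s)\<close> exceed the \<open>r\<close>-Rouquier bound.
\<close>

section \<open>\<open>\<beta>\<close>-sets\<close>

lemma part_Cons_1 [simp]: "part (q # l) (Suc 0) = q"
  by (simp add: part_def)

lemma part_Cons_Suc [simp]: "1 \<le> i \<Longrightarrow> part (q # l) (Suc i) = part l i"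
  by (auto simp: part_def nth_Cons')

lemma is_partition_Nil [simp]: "is_partition []"
  by (simp add: is_partition_def)

lemma is_partition_Cons: "is_partition (q # l) \<longleftrightarrow> q \<noteq> 0 \<and> (\<forall>x\<in>set l. x \<le> q) \<and> is_partition l"
  by (auto simp: is_partition_def)

lemma size_part_Nil [simp]: "size_part [] = 0"
  and size_part_Cons [simp]: "size_part (q # l) = q + size_part l"
  by (simp_all add: size_part_def)

lemma beta_set_Nil: "beta_set [] s = {..<s}"
proof (intro set_eqI iffI)
  fix x assume "x \<in> {..<s}"
  then have "x = int (part [] (nat (s - x))) - int (nat (s - x)) + s \<and> 1 \<le> nat (s - x)"
    by (auto simp: part_def)
  then show "x \<in> beta_set [] s" unfolding beta_set_def by blast
qed (auto simp: beta_set_def part_def)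

lemma beta_set_Cons: "beta_set (q # l) s = insert (int q - 1 + s) (beta_set l (s - 1))"
proof (intro set_eqI iffI)
  fix x assume "x \<in> beta_set (q # l) s"
  then obtain i where i: "1 \<le> i" "x = int (part (q # l) i) - int i + s"
    by (auto simp: beta_set_def)
  show "x \<in> insert (int q - 1 + s) (beta_set l (s - 1))"
  proof (cases "i = 1")
    case False
    then obtain j where "i = Suc j" "1 \<le> j" using i by (cases i) auto
    then show ?thesis using i unfolding beta_set_def by auto
  qed (use i in simp)
next
  fix x assume "x \<in> insert (int q - 1 + s) (beta_set l (s - 1))"
  then consider "x = int (part (q # l) 1) - int (1::nat) + s"
    | j where "1 \<le> j" "x = int (part (q # l) (Suc j)) - int (Suc j) + s"
    by (auto simp: beta_set_def)
  then show "x \<in> beta_set (q # l) s"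
  proof cases
    case 1 then show ?thesis unfolding beta_set_def by blast
  next
    case (2 j)
    moreover have "1 \<le> Suc j" by simp
    ultimately show ?thesis unfolding beta_set_def by blast
  qed
qed

definition bracketed :: "int set \<Rightarrow> int \<Rightarrow> int \<Rightarrow> bool" where
  "bracketed B L U \<longleftrightarrow> {..<L} \<subseteq> B \<and> B \<subseteq> {..<U}"

lemma bracketed_mono: "bracketed B L U \<Longrightarrow> L' \<le> L \<Longrightarrow> U \<le> U' \<Longrightarrow> bracketed B L' U'"
  unfolding bracketed_def by auto

lemma bracketed_insert: "bracketed B L U \<Longrightarrow> bracketed (insert x B) L (max U (x + 1))"
  unfolding bracketed_def by auto

lemma bracketed_lessThan: "bracketed {..<a} a a"
  by (simp add: bracketed_def)

lemma finite_bracketed_above: "bracketed B L U \<Longrightarrow> finite {y\<in>B. x < y}"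
  unfolding bracketed_def by (rule finite_subset[of _ "{x<..<U}"]) auto

lemma finite_bracketed_gaps_below: "bracketed B L U \<Longrightarrow> finite {y. y \<notin> B \<and> y \<le> x}"
  unfolding bracketed_def by (rule finite_subset[of _ "{L..x}"]) (auto simp: not_less[symmetric])

lemma bracketed_uniform:
  assumes "finite K" "\<forall>k\<in>K. \<exists>L U. bracketed (B k) L U"
  shows "\<exists>L U. \<forall>k\<in>K. bracketed (B k) L U"
  using assms
proof (induction K rule: finite_induct)
  case (insert a K)
  then obtain L U where "\<forall>k\<in>K. bracketed (B k) L U" by auto
  moreover obtain L' U' where "bracketed (B a) L' U'" using insert.prems by auto
  ultimately show ?case
    by (intro exI[of _ "min L L'"] exI[of _ "max U U'"]) (auto elim!: bracketed_mono)
qed simp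

lemma part_1_le_head: "is_partition (q # l) \<Longrightarrow> part l 1 \<le> q"
  by (cases l) (auto simp: part_def is_partition_Cons)

lemma beta_set_less: "is_partition l \<Longrightarrow> x \<in> beta_set l s \<Longrightarrow> x < int (part l 1) + s"
proof (induction l arbitrary: s x)
  case Nil then show ?case by (simp add: beta_set_Nil part_def)
next
  case (Cons q l)
  then have "is_partition l" "part l 1 \<le> q"
    using part_1_le_head by (auto simp: is_partition_Cons)
  with Cons show ?case by (fastforce simp: beta_set_Cons)
qed

lemma beta_set_Cons_tail_less:
  "is_partition (q # l) \<Longrightarrow> \<forall>z\<in>beta_set l (s - 1). z < int q - 1 + s"
  using beta_set_less[of l _ "s - 1"] part_1_le_head[of q l] by (force simp: is_partition_Cons)

lemma lessThan_subset_beta_set: "{..< s - int (length l)} \<subseteq> beta_set l s"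
proof (induction l arbitrary: s)
  case Nil then show ?case by (simp add: beta_set_Nil)
next
  case (Cons q l)
  from Cons.IH[of "s - 1"] show ?case
    unfolding beta_set_Cons by (auto simp: algebra_simps)
qed

lemma bracketed_beta_set:
  "is_partition l \<Longrightarrow> bracketed (beta_set l s) (s - int (length l)) (int (part l 1) + s)"
  using lessThan_subset_beta_set beta_set_less unfolding bracketed_def by blast

lemma insert_beta_set_above:
  assumes l: "is_partition l" and b: "\<forall>x\<in>beta_set l s. x < b"
  shows "\<exists>l'. is_partition l' \<and> insert b (beta_set l s) = beta_set l' (s + 1)"
proof (cases l)
  case Nil
  then have "s \<le> b" using b[rule_format, of "s - 1"] by (simp add: beta_set_Nil)
  show ?thesis
  proof (cases "b = s")
    case True
    then show ?thesis using Nil by (intro exI[of _ "[]"]) (auto simp: beta_set_Nil)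
  next
    case False
    then show ?thesis using Nil \<open>s \<le> b\<close>
      by (intro exI[of _ "[nat (b - s)]"]) (auto simp: beta_set_Cons is_partition_Cons)
  qed
next
  case (Cons p l0)
  then have "int p - 1 + s < b" "p \<noteq> 0" using b l by (auto simp: beta_set_Cons is_partition_Cons)
  then show ?thesis using l Cons
    by (intro exI[of _ "nat (b - s) # l"]) (auto simp: beta_set_Cons is_partition_Cons)
qed

lemma beta_set_of_finite_above:
  assumes "finite F" "F \<subseteq> {L..}"
  shows "\<exists>l s. is_partition l \<and> {..<L} \<union> F = beta_set l s"
  using assms
proof (induction F rule: finite_linorder_max_induct)
  case empty
  show ?case by (intro exI[of _ "[]"] exI[of _ L]) (simp add: beta_set_Nil)
next
  case (insert b A)
  then obtain l s where ls: "is_partition l" "{..<L} \<union> A = beta_set l s" by auto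
  have "\<forall>x\<in>beta_set l s. x < b" using insert ls(2)[symmetric] by auto
  from insert_beta_set_above[OF ls(1) this] show ?case
    using ls(2) by (metis Un_insert_right)
qed

lemma bracketed_imp_beta_set:
  assumes "bracketed B L U"
  shows "\<exists>l s. is_partition l \<and> B = beta_set l s"
proof -
  have "B \<inter> {L..} \<subseteq> {L..<U}" using assms unfolding bracketed_def by auto
  then have "finite (B \<inter> {L..})" by (rule finite_subset) simp
  moreover have "B = {..<L} \<union> (B \<inter> {L..})" using assms unfolding bracketed_def by auto
  ultimately show ?thesis using beta_set_of_finite_above[of "B \<inter> {L..}" L] by auto
qed

lemma charge_count:
  assumes "is_partition l"
  shows "s = x + 1 + int (card {y\<in>beta_set l s. x < y}) - int (card {y. y \<notin> beta_set l s \<and> y \<le> x})"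
  using assms
proof (induction l arbitrary: s)
  case Nil
  have "{y\<in>beta_set [] s. x < y} = {x<..<s}" "{y. y \<notin> beta_set [] s \<and> y \<le> x} = {s..x}"
    by (auto simp: beta_set_Nil)
  then show ?case by simp
next
  case (Cons q l)
  have l: "is_partition l" using Cons.prems by (simp add: is_partition_Cons)
  define m where "m = int q - 1 + s"
  define B where "B = beta_set l (s - 1)"
  have m: "m \<notin> B" using beta_set_Cons_tail_less[OF Cons.prems] unfolding m_def B_def by blast
  have B: "bracketed B (s - 1 - int (length l)) (int (part l 1) + (s - 1))"
    unfolding B_def by (rule bracketed_beta_set[OF l])
  have IH: "s - 1 = x + 1 + int (card {y\<in>B. x < y}) - int (card {y. y \<notin> B \<and> y \<le> x})"
    unfolding B_def by (rule Cons.IH[OF l])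
  show ?case
  proof (cases "x < m")
    case True
    then have "{y\<in>insert m B. x < y} = insert m {y\<in>B. x < y}"
      "{y. y \<notin> insert m B \<and> y \<le> x} = {y. y \<notin> B \<and> y \<le> x}" by auto
    then show ?thesis using IH m finite_bracketed_above[OF B]
      unfolding beta_set_Cons m_def[symmetric] B_def[symmetric] by simp
  next
    case False
    then have "{y\<in>insert m B. x < y} = {y\<in>B. x < y}"
      "{y. y \<notin> B \<and> y \<le> x} = insert m {y. y \<notin> insert m B \<and> y \<le> x}" using m by auto
    moreover have "finite {y. y \<notin> insert m B \<and> y \<le> x}"
      by (rule finite_subset[OF _ finite_bracketed_gaps_below[OF B, of x]]) auto
    ultimately show ?thesis using IH
      unfolding beta_set_Cons m_def[symmetric] B_def[symmetric] by simp
  qed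
qed

lemma beta_set_inj_same_charge:
  "is_partition l \<Longrightarrow> is_partition m \<Longrightarrow> beta_set l s = beta_set m s \<Longrightarrow> l = m"
proof (induction l arbitrary: m s)
  case Nil
  show ?case
  proof (cases m)
    case (Cons p m0)
    then have "int p - 1 + s \<in> {..<s}" "p \<noteq> 0"
      using Nil.prems by (auto simp: beta_set_Nil beta_set_Cons is_partition_Cons)
    then show ?thesis by simp
  qed simp
next
  case (Cons q l)
  show ?case
  proof (cases m)
    case Nil
    have "int q - 1 + s \<in> beta_set m s"
      using Cons.prems(3) by (metis beta_set_Cons insertI1)
    then have "int q - 1 + s \<in> {..<s}" "q \<noteq> 0"
      using Nil Cons.prems(1) by (simp_all add: beta_set_Nil is_partition_Cons)
    then show ?thesis by simp
  next
    case m: (Cons p m0)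
    have pm: "is_partition (p # m0)" using Cons.prems(2) m by simp
    have "int q - 1 + s \<in> beta_set (p # m0) s" "int p - 1 + s \<in> beta_set (q # l) s"
      using Cons.prems(3) m by (auto simp: beta_set_Cons)
    then have "p = q"
      using beta_set_less[OF pm] beta_set_less[OF Cons.prems(1)] by fastforce
    have "int q - 1 + s \<notin> beta_set l (s - 1)" "int q - 1 + s \<notin> beta_set m0 (s - 1)"
      using beta_set_Cons_tail_less[OF Cons.prems(1)] beta_set_Cons_tail_less[OF pm] \<open>p = q\<close> by auto
    moreover have "insert (int q - 1 + s) (beta_set l (s - 1)) = insert (int q - 1 + s) (beta_set m0 (s - 1))"
      using Cons.prems(3) m \<open>p = q\<close> by (simp add: beta_set_Cons)
    ultimately have "beta_set l (s - 1) = beta_set m0 (s - 1)" by (metis Diff_insert_absorb)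
    then show ?thesis using Cons.IH[of m0 "s - 1"] Cons.prems(1) pm m \<open>p = q\<close>
      by (simp add: is_partition_Cons)
  qed
qed

lemma beta_set_inj:
  assumes "is_partition l" "is_partition m" "beta_set l s = beta_set m t"
  shows "l = m \<and> s = t"
proof -
  have "s = t" using charge_count[OF assms(1), of s 0] charge_count[OF assms(2), of t 0] assms(3) by simp
  then show ?thesis using beta_set_inj_same_charge assms by simp
qed

lemma config_of_beta_set: "is_partition l \<Longrightarrow> config_of (beta_set l s) = (l, s)"
  unfolding config_of_def by (rule the_equality) (auto dest: beta_set_inj)

lemma config_of_bracketed:
  assumes "bracketed B L U"
  shows "is_partition (fst (config_of B)) \<and> B = beta_set (fst (config_of B)) (snd (config_of B))"
  using bracketed_imp_beta_set[OF assms] config_of_beta_set by fastforce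

section \<open>Counting inversions\<close>

definition weak_inversions :: "int set \<Rightarrow> int set \<Rightarrow> nat" where
  "weak_inversions X Y = card {(x, y). x \<in> X \<and> y \<notin> Y \<and> y \<le> x}"

definition inversions :: "int set \<Rightarrow> int set \<Rightarrow> nat" where
  "inversions X Y = card {(x, y). x \<in> X \<and> y \<notin> Y \<and> y < x}"

definition pronic :: "int \<Rightarrow> int" where
  "pronic z = z * (z + 1)"

lemma finite_weak_inversion_pairs:
  assumes "bracketed X L U" "bracketed Y L' U'"
  shows "finite {(x, y). x \<in> X \<and> y \<notin> Y \<and> y \<le> x}"
proof (rule finite_subset[of _ "{L'..<U} \<times> {L'..<U}"])
  show "{(x, y). x \<in> X \<and> y \<notin> Y \<and> y \<le> x} \<subseteq> {L'..<U} \<times> {L'..<U}"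
  proof clarify
    fix x y assume "x \<in> X" "y \<notin> Y" "y \<le> x"
    moreover have "x < U" using \<open>x \<in> X\<close> assms(1) unfolding bracketed_def by auto
    moreover have "L' \<le> y" using \<open>y \<notin> Y\<close> assms(2) unfolding bracketed_def by (auto simp: not_less[symmetric])
    ultimately show "x \<in> {L'..<U} \<and> y \<in> {L'..<U}" by auto
  qed
qed simp

lemma finite_inversion_pairs:
  assumes "bracketed X L U" "bracketed Y L' U'"
  shows "finite {(x, y). x \<in> X \<and> y \<notin> Y \<and> y < x}"
  by (rule finite_subset[OF _ finite_weak_inversion_pairs[OF assms]]) auto

lemma inversions_insert_left:
  assumes X: "bracketed X L U" and Y: "bracketed Y L' U'" and m: "\<forall>x\<in>X. x < m"
  shows "int (weak_inversions (insert m X) Y) + int (inversions Y (insert m X)) =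
    int (weak_inversions X Y) + int (inversions Y X)
      + int (card {y. y \<notin> Y \<and> y \<le> m}) - int (card {y\<in>Y. m < y})"
proof -
  have mX: "m \<notin> X" using m by auto
  have split1: "{(x, y). x \<in> insert m X \<and> y \<notin> Y \<and> y \<le> x} =
      {(x, y). x \<in> X \<and> y \<notin> Y \<and> y \<le> x} \<union> {m} \<times> {y. y \<notin> Y \<and> y \<le> m}" by auto
  have 1: "weak_inversions (insert m X) Y = weak_inversions X Y + card {y. y \<notin> Y \<and> y \<le> m}"
    unfolding weak_inversions_def split1 using mX finite_weak_inversion_pairs[OF X Y] finite_bracketed_gaps_below[OF Y]
    by (subst card_Un_disjoint) (auto simp: card_cartesian_product)
  have split2: "{(y, x). y \<in> Y \<and> x \<notin> X \<and> x < y} =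
      {(y, x). y \<in> Y \<and> x \<notin> insert m X \<and> x < y} \<union> {y\<in>Y. m < y} \<times> {m}" using mX by auto
  have 2: "inversions Y X = inversions Y (insert m X) + card {y\<in>Y. m < y}"
    unfolding inversions_def split2
    using finite_inversion_pairs[OF Y bracketed_insert[OF X]] finite_bracketed_above[OF Y, of m]
    by (subst card_Un_disjoint) (simp_all add: card_cartesian_product, auto)
  show ?thesis using 1 2 by simp
qed

lemma inversions_insert_right:
  assumes X: "bracketed X L U" and Y: "bracketed Y L' U'" and m: "\<forall>y\<in>Y. y < m"
  shows "int (weak_inversions X (insert m Y)) + int (inversions (insert m Y) X) =
    int (weak_inversions X Y) + int (inversions Y X)
      - int (card {x\<in>X. m \<le> x}) + int (card {x. x \<notin> X \<and> x < m})"
proof -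
  have mY: "m \<notin> Y" using m by auto
  have fin_above: "finite {x\<in>X. m \<le> x}"
    using finite_bracketed_above[OF X, of "m - 1"] by (simp add: zle_diff1_eq[symmetric] del: zle_diff1_eq)
  have fin_gaps: "finite {x. x \<notin> X \<and> x < m}"
    by (rule finite_subset[OF _ finite_bracketed_gaps_below[OF X, of m]]) auto
  have split1: "{(x, y). x \<in> X \<and> y \<notin> Y \<and> y \<le> x} =
      {(x, y). x \<in> X \<and> y \<notin> insert m Y \<and> y \<le> x} \<union> {x\<in>X. m \<le> x} \<times> {m}" using mY by auto
  have 1: "weak_inversions X Y = weak_inversions X (insert m Y) + card {x\<in>X. m \<le> x}"
    unfolding weak_inversions_def split1 using finite_weak_inversion_pairs[OF X bracketed_insert[OF Y]] fin_above
    by (subst card_Un_disjoint) (simp_all add: card_cartesian_product, auto)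
  have split2: "{(y, x). y \<in> insert m Y \<and> x \<notin> X \<and> x < y} =
      {(y, x). y \<in> Y \<and> x \<notin> X \<and> x < y} \<union> {m} \<times> {x. x \<notin> X \<and> x < m}" by auto
  have 2: "inversions (insert m Y) X = inversions Y X + card {x. x \<notin> X \<and> x < m}"
    unfolding inversions_def split2 using mY finite_inversion_pairs[OF Y X] fin_gaps
    by (subst card_Un_disjoint) (auto simp: card_cartesian_product)
  show ?thesis using 1 2 by simp
qed

lemma inversions_lessThan_add:
  "2 * (int (weak_inversions {..<b + int d} {..<b}) + int (inversions {..<b} {..<b + int d}))
     = pronic (int d)"
  and inversions_lessThan_add':
  "2 * (int (weak_inversions {..<a} {..<a + int d}) + int (inversions {..<a + int d} {..<a}))
     = pronic (- int d)"
proof (induction d)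
  case 0
  have none: "{(x, y). x \<in> {..<c} \<and> y \<notin> {..<c} \<and> y \<le> x} = {}"
    "{(x, y). x \<in> {..<c} \<and> y \<notin> {..<c} \<and> y < x} = {}" for c :: int by auto
  have "weak_inversions {..<c} {..<c} = 0" "inversions {..<c} {..<c} = 0" for c
    unfolding weak_inversions_def inversions_def none by simp_all
  {
    case 1 show ?case by (simp add: \<open>\<And>c. weak_inversions {..<c} {..<c} = 0\<close>
        \<open>\<And>c. inversions {..<c} {..<c} = 0\<close> pronic_def)
  next
    case 2 show ?case by (simp add: \<open>\<And>c. weak_inversions {..<c} {..<c} = 0\<close>
        \<open>\<And>c. inversions {..<c} {..<c} = 0\<close> pronic_def)
  }
next
  case (Suc d)
  have ins: "{..<c + int (Suc d)} = insert (c + int d) {..<c + int d}" for c by auto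
  {
    case 1
    have counts: "{y. y \<notin> {..<b} \<and> y \<le> b + int d} = {b..b + int d}" "{y \<in> {..<b}. b + int d < y} = {}"
      by auto
    show ?case unfolding ins
      using inversions_insert_left[where X = "{..<b + int d}" and Y = "{..<b}" and m = "b + int d",
        OF bracketed_lessThan bracketed_lessThan] Suc.IH(1) unfolding counts
      by (simp add: pronic_def algebra_simps)
  next
    case 2
    have counts: "{x \<in> {..<a}. a + int d \<le> x} = {}" "{x. x \<notin> {..<a} \<and> x < a + int d} = {a..<a + int d}"
      by auto
    show ?case unfolding ins
      using inversions_insert_right[where X = "{..<a}" and Y = "{..<a + int d}" and m = "a + int d",
        OF bracketed_lessThan bracketed_lessThan] Suc.IH(2) unfolding counts
      by (simp add: pronic_def algebra_simps)
  }
qed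

lemma inversions_lessThan:
  "2 * (int (weak_inversions {..<a} {..<b}) + int (inversions {..<b} {..<a})) = pronic (a - b)"
proof (cases "b \<le> a")
  case True
  then obtain d where "a = b + int d" using zle_iff_zadd by blast
  then show ?thesis using inversions_lessThan_add(1)[of b d] by simp
next
  case False
  then obtain d where "b = a + int d" using zle_iff_zadd by (meson nle_le)
  then show ?thesis using inversions_lessThan_add'[of a d] by simp
qed

lemma inversions_lessThan_beta_set:
  assumes "is_partition m"
  shows "2 * (int (weak_inversions {..<a} (beta_set m b)) + int (inversions (beta_set m b) {..<a}))
    = 2 * int (size_part m) + pronic (a - b)"
  using assms
proof (induction m arbitrary: b)
  case Nil then show ?case using inversions_lessThan[of a b] by (simp add: beta_set_Nil)
next
  case (Cons p m)
  have m: "is_partition m" using Cons.prems by (simp add: is_partition_Cons)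
  define y where "y = int p - 1 + b"
  have "{x\<in>{..<a}. y \<le> x} = {y..<a}" "{x. x \<notin> {..<a} \<and> x < y} = {a..<y}" by auto
  then have counts: "int (card {x\<in>{..<a}. y \<le> x}) - int (card {x. x \<notin> {..<a} \<and> x < y}) = a - y"
    by simp
  show ?case
    using inversions_insert_right[OF bracketed_lessThan[of a] bracketed_beta_set[OF m, of "b - 1"]
        beta_set_Cons_tail_less[OF Cons.prems, of b, folded y_def]]
      Cons.IH[OF m, of "b - 1"] counts
    unfolding beta_set_Cons y_def[symmetric]
    by (simp add: y_def pronic_def algebra_simps)
qed

lemma inversions_beta_sets:
  assumes "is_partition l" "is_partition m"
  shows "2 * (int (weak_inversions (beta_set l a) (beta_set m b)) + int (inversions (beta_set m b) (beta_set l a)))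
    = 2 * int (size_part l) + 2 * int (size_part m) + pronic (a - b)"
  using assms
proof (induction l arbitrary: a)
  case Nil then show ?case using inversions_lessThan_beta_set by (simp add: beta_set_Nil)
next
  case (Cons q l)
  have l: "is_partition l" using Cons.prems by (simp add: is_partition_Cons)
  define x where "x = int q - 1 + a"
  show ?case
    using inversions_insert_left[OF bracketed_beta_set[OF l, of "a - 1"] bracketed_beta_set[OF Cons.prems(2), of b]
        beta_set_Cons_tail_less[OF Cons.prems(1), of a, folded x_def]]
      Cons.IH[OF l Cons.prems(2), of "a - 1"] charge_count[OF Cons.prems(2), of b x]
    unfolding beta_set_Cons x_def[symmetric]
    by (simp add: x_def pronic_def algebra_simps)
qed

lemma inversions_beta_set_self:
  assumes "is_partition l"
  shows "inversions (beta_set l a) (beta_set l a) = size_part l"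
proof -
  have "weak_inversions (beta_set l a) (beta_set l a) = inversions (beta_set l a) (beta_set l a)"
    unfolding weak_inversions_def inversions_def by (metis nless_le)
  then show ?thesis using inversions_beta_sets[OF assms assms, of a a] by (simp add: pronic_def)
qed

section \<open>Interleaving \<open>\<beta>\<close>-sets\<close>

definition interleave_pos :: "nat \<Rightarrow> nat \<Rightarrow> int \<Rightarrow> int" where
  "interleave_pos r k c = (c + 1) * int r - int k"

definition interleave :: "nat \<Rightarrow> (nat \<Rightarrow> int set) \<Rightarrow> int set" where
  "interleave r C = (\<Union>k\<in>{1..r}. interleave_pos r k ` C k)"

lemma interleave_pos_less_iff:
  assumes "j \<in> {1..r}" "k \<in> {1..r}"
  shows "interleave_pos r k c' < interleave_pos r j c \<longleftrightarrow> c' < c \<or> (c' = c \<and> j < k)"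
proof -
  have iff: "interleave_pos r k c' < interleave_pos r j c \<longleftrightarrow> (c' - c) * int r < int k - int j"
    by (simp add: interleave_pos_def algebra_simps)
  have bounds: "int k \<le> int r" "1 \<le> int k" "int j \<le> int r" "1 \<le> int j" using assms by auto
  consider "c' < c" | "c' = c" | "c < c'" by linarith
  then show ?thesis
  proof cases
    case 1
    then have "(c' - c) * int r \<le> - 1 * int r" by (intro mult_right_mono) auto
    then have "interleave_pos r k c' < interleave_pos r j c" using iff bounds by linarith
    then show ?thesis using 1 by simp
  next
    case 3
    then have "1 * int r \<le> (c' - c) * int r" by (intro mult_right_mono) auto
    then have "\<not> interleave_pos r k c' < interleave_pos r j c" using iff bounds by linarith
    then show ?thesis using 3 by simp
  qed (use iff in auto)
qed

lemma interleave_pos_eq_iff: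
  assumes "j \<in> {1..r}" "k \<in> {1..r}"
  shows "interleave_pos r j c = interleave_pos r k c' \<longleftrightarrow> j = k \<and> c = c'"
proof
  assume eq: "interleave_pos r j c = interleave_pos r k c'"
  have "\<not> (c' < c \<or> (c' = c \<and> j < k))" "\<not> (c < c' \<or> (c = c' \<and> k < j))"
    using interleave_pos_less_iff[OF assms, of c' c] interleave_pos_less_iff[OF assms(2,1), of c c'] eq
    by simp_all
  then show "j = k \<and> c = c'" by auto
qed simp

lemma interleave_pos_surj:
  assumes "1 \<le> r"
  shows "\<exists>k\<in>{1..r}. y = interleave_pos r k (y div int r)"
proof -
  have m: "0 \<le> y mod int r" "y mod int r < int r" using assms by auto
  define k where "k = r - nat (y mod int r)"
  have k: "int k = int r - y mod int r" using m unfolding k_def by simp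
  have "y = interleave_pos r k (y div int r)"
    unfolding interleave_pos_def k by (simp add: algebra_simps)
  moreover have "k \<in> {1..r}" using m unfolding k_def by auto
  ultimately show ?thesis by blast
qed

lemma interleave_pos_nonneg_iff:
  assumes "k \<in> {1..r}"
  shows "-1 < interleave_pos r k c \<longleftrightarrow> -1 < c"
proof (cases "-1 < c")
  case True
  then have "int r \<le> (c + 1) * int r" using mult_right_mono[of 1 "c + 1" "int r"] by simp
  moreover have "int k \<le> int r" using assms by simp
  ultimately show ?thesis using True by (simp add: interleave_pos_def)
next
  case False
  then have "(c + 1) * int r \<le> 0" by (simp add: mult_nonpos_nonneg)
  then show ?thesis using False assms by (simp add: interleave_pos_def)
qed

lemma mem_interleave_iff:
  assumes "k \<in> {1..r}"
  shows "interleave_pos r k c \<in> interleave r C \<longleftrightarrow> c \<in> C k"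
proof
  assume "interleave_pos r k c \<in> interleave r C"
  then obtain j d where "j \<in> {1..r}" "d \<in> C j" "interleave_pos r k c = interleave_pos r j d"
    unfolding interleave_def by auto
  then show "c \<in> C k" using interleave_pos_eq_iff[OF assms] by auto
qed (use assms in \<open>auto simp: interleave_def\<close>)

lemma bracketed_interleave:
  assumes r: "1 \<le> r" and C: "\<forall>k\<in>{1..r}. bracketed (C k) L U"
  shows "bracketed (interleave r C) (L * int r) (U * int r)"
  unfolding bracketed_def
proof safe
  fix y assume y: "y < L * int r"
  obtain k where k: "k \<in> {1..r}" "y = interleave_pos r k (y div int r)"
    using interleave_pos_surj[OF r] by blast
  have "y div int r * int r \<le> y"
    using r pos_mod_sign[of "int r" y] div_mult_mod_eq[of y "int r"] by linarith
  then have "y div int r < L"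
    using y by (meson mult_right_less_imp_less of_nat_0_le_iff order.strict_trans1)
  then show "y \<in> interleave r C"
    using C k mem_interleave_iff unfolding bracketed_def by (metis lessThan_iff subsetD)
next
  fix y assume "y \<in> interleave r C"
  then obtain k c where kc: "k \<in> {1..r}" "c \<in> C k" "y = interleave_pos r k c"
    unfolding interleave_def by auto
  then have "c < U" using C unfolding bracketed_def by blast
  then have "c + 1 \<le> U" by simp
  then have "(c + 1) * int r \<le> U * int r" by (simp add: mult_right_mono)
  moreover have "1 \<le> int k" using kc(1) by simp
  ultimately show "y < U * int r" using kc(3) unfolding interleave_pos_def by linarith
qed

lemma card_UN_interleave_pos:
  assumes "\<forall>k\<in>{1..r}. finite (A k)"
  shows "card (\<Union>k\<in>{1..r}. interleave_pos r k ` A k) = (\<Sum>k\<in>{1..r}. card (A k))"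
proof -
  have "card (\<Union>k\<in>{1..r}. interleave_pos r k ` A k) = (\<Sum>k\<in>{1..r}. card (interleave_pos r k ` A k))"
    by (rule card_UN_disjoint) (use assms interleave_pos_eq_iff in auto)
  also have "\<dots> = (\<Sum>k\<in>{1..r}. card (A k))"
    by (rule sum.cong) (auto intro!: card_image inj_onI simp: interleave_pos_eq_iff)
  finally show ?thesis .
qed

lemma charge_interleave:
  assumes r: "1 \<le> r" and \<rho>: "\<forall>k\<in>{1..r}. is_partition (\<rho> k)"
    and C: "\<forall>k\<in>{1..r}. C k = beta_set (\<rho> k) (t k)"
    and \<rho>': "is_partition \<rho>'" and D: "interleave r C = beta_set \<rho>' t'"
  shows "t' = (\<Sum>k\<in>{1..r}. t k)"
proof -
  define beads where "beads X = {y\<in>X. -1 < y}" for X :: "int set"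
  define gaps where "gaps X = {y. y \<notin> X \<and> y \<le> -1}" for X :: "int set"
  have charge: "t' = int (card (beads (interleave r C))) - int (card (gaps (interleave r C)))"
    using charge_count[OF \<rho>', of t' "-1"] unfolding D beads_def gaps_def by simp
  have charge_k: "t k = int (card (beads (C k))) - int (card (gaps (C k)))" if "k \<in> {1..r}" for k
    using charge_count[of "\<rho> k" "t k" "-1"] \<rho> C that unfolding beads_def gaps_def by simp
  have "beads (interleave r C) = (\<Union>k\<in>{1..r}. interleave_pos r k ` beads (C k))"
    unfolding beads_def interleave_def using interleave_pos_nonneg_iff by blast
  moreover have "gaps (interleave r C) = (\<Union>k\<in>{1..r}. interleave_pos r k ` gaps (C k))"
  proof (intro set_eqI iffI)
    fix y assume y: "y \<in> gaps (interleave r C)"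
    obtain k where k: "k \<in> {1..r}" "y = interleave_pos r k (y div int r)"
      using interleave_pos_surj[OF r] by blast
    have "y div int r \<notin> C k"
      using y k(2) mem_interleave_iff[OF k(1), of "y div int r" C] unfolding gaps_def by auto
    moreover have "y div int r \<le> -1"
      using y k(2) interleave_pos_nonneg_iff[OF k(1), of "y div int r"] unfolding gaps_def by auto
    ultimately have "y div int r \<in> gaps (C k)" unfolding gaps_def by simp
    then show "y \<in> (\<Union>k\<in>{1..r}. interleave_pos r k ` gaps (C k))" using k by blast
  qed (auto simp: gaps_def mem_interleave_iff interleave_pos_nonneg_iff not_less[symmetric])
  moreover have "\<forall>k\<in>{1..r}. finite (beads (C k))" "\<forall>k\<in>{1..r}. finite (gaps (C k))"
    using bracketed_beta_set \<rho> C finite_bracketed_above finite_bracketed_gaps_below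
    unfolding beads_def gaps_def by metis+
  ultimately have "t' = (\<Sum>k\<in>{1..r}. int (card (beads (C k)))) - (\<Sum>k\<in>{1..r}. int (card (gaps (C k))))"
    using charge by (simp only: card_UN_interleave_pos of_nat_sum)
  also have "\<dots> = (\<Sum>k\<in>{1..r}. t k)"
    using charge_k by (simp add: sum_subtractf)
  finally show ?thesis .
qed

definition component_inversions :: "nat \<Rightarrow> (nat \<Rightarrow> int set) \<Rightarrow> nat \<Rightarrow> nat \<Rightarrow> (int \<times> int) set" where
  "component_inversions r C a b =
     {(c, c'). c \<in> C a \<and> c' \<notin> C b \<and> interleave_pos r b c' < interleave_pos r a c}"

lemma card_component_inversions_less:
  assumes "a \<in> {1..r}" "b \<in> {1..r}" "a < b"
  shows "card (component_inversions r C a b) = weak_inversions (C a) (C b)"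
proof -
  have "component_inversions r C a b = {(c, c'). c \<in> C a \<and> c' \<notin> C b \<and> c' \<le> c}"
    unfolding component_inversions_def using interleave_pos_less_iff[OF assms(1,2)] assms(3)
    by (auto simp: le_less)
  then show ?thesis unfolding weak_inversions_def by simp
qed

lemma card_component_inversions_ge:
  assumes "a \<in> {1..r}" "b \<in> {1..r}" "\<not> a < b"
  shows "card (component_inversions r C a b) = inversions (C a) (C b)"
proof -
  have "component_inversions r C a b = {(c, c'). c \<in> C a \<and> c' \<notin> C b \<and> c' < c}"
    unfolding component_inversions_def using interleave_pos_less_iff[OF assms(1,2)] assms(3) by auto
  then show ?thesis unfolding inversions_def by simp
qed

lemma inversion_pairs_interleave:
  assumes r: "1 \<le> r"
  shows "{(x, y). x \<in> interleave r C \<and> y \<notin> interleave r C \<and> y < x}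
    = (\<Union>(a, b)\<in>{1..r} \<times> {1..r}.
         map_prod (interleave_pos r a) (interleave_pos r b) ` component_inversions r C a b)"
proof (intro set_eqI iffI)
  fix p assume "p \<in> {(x, y). x \<in> interleave r C \<and> y \<notin> interleave r C \<and> y < x}"
  then obtain x y where p: "p = (x, y)" "x \<in> interleave r C" "y \<notin> interleave r C" "y < x" by auto
  then obtain a c where a: "a \<in> {1..r}" "c \<in> C a" "x = interleave_pos r a c"
    unfolding interleave_def by auto
  obtain b where b: "b \<in> {1..r}" "y = interleave_pos r b (y div int r)"
    using interleave_pos_surj[OF r] by blast
  have "y div int r \<notin> C b" using b p(3) mem_interleave_iff[of b r] by metis
  then have "(c, y div int r) \<in> component_inversions r C a b"
    using a b p(4) unfolding component_inversions_def by auto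
  then show "p \<in> (\<Union>(a, b)\<in>{1..r} \<times> {1..r}.
      map_prod (interleave_pos r a) (interleave_pos r b) ` component_inversions r C a b)"
    using a b p(1) by force
qed (auto simp: component_inversions_def mem_interleave_iff)

lemma inversions_interleave:
  assumes r: "1 \<le> r" and fin: "finite {(x, y). x \<in> interleave r C \<and> y \<notin> interleave r C \<and> y < x}"
  shows "inversions (interleave r C) (interleave r C)
    = (\<Sum>(a, b)\<in>{1..r} \<times> {1..r}. card (component_inversions r C a b))"
proof -
  define K where "K = {1..r}"
  define pos where "pos a b = map_prod (interleave_pos r a) (interleave_pos r b)" for a b
  define piece where "piece = (\<lambda>(a, b). pos a b ` component_inversions r C a b)"
  have pieces: "{(x, y). x \<in> interleave r C \<and> y \<notin> interleave r C \<and> y < x} = \<Union> (piece ` (K \<times> K))"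
    unfolding inversion_pairs_interleave[OF r] piece_def pos_def K_def by (simp add: case_prod_beta')
  have inj: "inj_on (pos a b) S" if "a \<in> K" "b \<in> K" for a b S
    using that interleave_pos_eq_iff unfolding pos_def K_def by (auto intro!: inj_onI)
  have "card (\<Union> (piece ` (K \<times> K))) = (\<Sum>q\<in>K \<times> K. card (piece q))"
  proof (rule card_UN_disjoint)
    show "\<forall>q\<in>K \<times> K. finite (piece q)"
      using fin pieces by (metis Sup_upper finite_subset image_eqI)
    show "\<forall>q\<in>K \<times> K. \<forall>q'\<in>K \<times> K. q \<noteq> q' \<longrightarrow> piece q \<inter> piece q' = {}"
      unfolding piece_def pos_def K_def by (auto simp: interleave_pos_eq_iff)
  qed (simp add: K_def)
  also have "\<dots> = (\<Sum>(a, b)\<in>K \<times> K. card (component_inversions r C a b))"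
    by (rule sum.cong) (auto simp: piece_def card_image inj)
  finally show ?thesis unfolding inversions_def pieces K_def .
qed

lemma sum_square_ge_row_column:
  fixes f :: "'a \<Rightarrow> 'a \<Rightarrow> nat"
  assumes "finite K" "k \<in> K"
  shows "f k k + (\<Sum>j\<in>K - {k}. f j k + f k j) \<le> (\<Sum>a\<in>K. \<Sum>b\<in>K. f a b)"
proof -
  have "(\<Sum>j\<in>K - {k}. f j k) \<le> (\<Sum>a\<in>K - {k}. \<Sum>b\<in>K. f a b)"
    by (rule sum_mono) (use assms in \<open>simp add: member_le_sum\<close>)
  moreover have "(\<Sum>b\<in>K. f k b) = f k k + (\<Sum>j\<in>K - {k}. f k j)"
    by (rule sum.remove[OF assms])
  moreover have "(\<Sum>a\<in>K. \<Sum>b\<in>K. f a b) = (\<Sum>b\<in>K. f k b) + (\<Sum>a\<in>K - {k}. \<Sum>b\<in>K. f a b)"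
    by (rule sum.remove[OF assms])
  ultimately show ?thesis by (simp add: sum.distrib)
qed

lemma component_inversions_pair:
  assumes "a \<in> {1..r}" "b \<in> {1..r}" "a < b"
    and "is_partition (\<rho> a)" "is_partition (\<rho> b)"
    and "C a = beta_set (\<rho> a) (t a)" "C b = beta_set (\<rho> b) (t b)"
  shows "2 * int (card (component_inversions r C a b) + card (component_inversions r C b a))
    = 2 * int (size_part (\<rho> a)) + 2 * int (size_part (\<rho> b)) + pronic (t a - t b)"
  using inversions_beta_sets[OF assms(4,5), of "t a" "t b"] assms
  by (simp add: card_component_inversions_less card_component_inversions_ge)

lemma pronic_nonneg: "0 \<le> pronic z"
  unfolding pronic_def by (cases "0 \<le> z") (auto simp: mult_nonpos_nonpos)

lemma pronic_sum_ge: "2 * (w - z) - 2 \<le> pronic z + pronic w"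
proof -
  have "pronic z + pronic w - (2 * (w - z) - 2) = pronic (z + 1) + pronic (w - 1)"
    by (simp add: pronic_def algebra_simps)
  then show ?thesis using pronic_nonneg[of "z + 1"] pronic_nonneg[of "w - 1"] by linarith
qed

lemma size_interleave_ge:
  assumes r: "1 \<le> r" and \<rho>: "\<forall>k\<in>{1..r}. is_partition (\<rho> k)"
    and C: "\<forall>k\<in>{1..r}. C k = beta_set (\<rho> k) (t k)"
    and \<rho>': "is_partition \<rho>'" and D: "interleave r C = beta_set \<rho>' t'"
    and k: "k \<in> {1..r}"
  shows "2 * int r * int (size_part (\<rho> k))
      + (\<Sum>j\<in>{1..r} - {k}. pronic (if j < k then t j - t k else t k - t j))
    \<le> 2 * int (size_part \<rho>')"
proof -
  define K where "K = {1..r}"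
  define G where "G a b = card (component_inversions r C a b)" for a b
  have "finite {(x, y). x \<in> interleave r C \<and> y \<notin> interleave r C \<and> y < x}"
    unfolding D using finite_inversion_pairs[OF bracketed_beta_set[OF \<rho>'] bracketed_beta_set[OF \<rho>']] .
  then have "inversions (interleave r C) (interleave r C) = (\<Sum>a\<in>K. \<Sum>b\<in>K. G a b)"
    unfolding G_def K_def sum.cartesian_product by (rule inversions_interleave[OF r])
  then have "size_part \<rho>' = (\<Sum>a\<in>K. \<Sum>b\<in>K. G a b)"
    using inversions_beta_set_self[OF \<rho>', of t'] unfolding D by simp
  moreover have "G k k + (\<Sum>j\<in>K - {k}. G j k + G k j) \<le> (\<Sum>a\<in>K. \<Sum>b\<in>K. G a b)"
    using k unfolding K_def by (intro sum_square_ge_row_column) auto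
  moreover have "G k k = size_part (\<rho> k)"
    using card_component_inversions_ge[OF k k] inversions_beta_set_self \<rho> C k unfolding G_def by simp
  ultimately have size: "int (size_part (\<rho> k)) + (\<Sum>j\<in>K - {k}. int (G j k + G k j)) \<le> int (size_part \<rho>')"
    by (simp only: of_nat_sum[symmetric] of_nat_add[symmetric] of_nat_le_iff)
  moreover have "2 * int (size_part (\<rho> k)) + pronic (if j < k then t j - t k else t k - t j)
      \<le> 2 * int (G j k + G k j)" if "j \<in> K - {k}" for j
  proof (cases "j < k")
    case True
    then show ?thesis using component_inversions_pair[of j r k \<rho> C t] \<rho> C k that
      unfolding G_def K_def by simp
  next
    case False
    then show ?thesis using component_inversions_pair[of k r j \<rho> C t] \<rho> C k that
      unfolding G_def K_def by (simp add: add.commute)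
  qed
  then have "(\<Sum>j\<in>K - {k}. 2 * int (size_part (\<rho> k)) + pronic (if j < k then t j - t k else t k - t j))
      \<le> 2 * (\<Sum>j\<in>K - {k}. int (G j k + G k j))"
    unfolding sum_distrib_left by (rule sum_mono)
  moreover have "int (card (K - {k})) = int r - 1" using k unfolding K_def by simp
  ultimately show ?thesis
    using size unfolding K_def[symmetric] by (simp add: sum.distrib algebra_simps)
qed

section \<open>Runners and Uglov's map\<close>

lemma runner_eq_preimage:
  assumes "0 < e" "0 \<le> i" "i < e"
  shows "runner e B i = {c. c * e + i \<in> B}"
proof safe
  fix x assume "x \<in> runner e B i"
  then obtain b where b: "b \<in> B" "b mod e = i" "x = (b - i) div e" unfolding runner_def by auto
  have "b = b div e * e + i" using b(2) by (metis div_mult_mod_eq)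
  moreover from this have "x = b div e"
    using b(3) assms(1) by (metis add_diff_cancel_right' nonzero_mult_div_cancel_right less_irrefl)
  ultimately show "x * e + i \<in> B" using b(1) by simp
next
  fix c assume "c * e + i \<in> B"
  moreover have "(c * e + i) mod e = i" "(c * e + i - i) div e = c" using assms by simp_all
  ultimately show "c \<in> runner e B i" unfolding runner_def by force
qed

lemma bracketed_runner:
  assumes e: "0 < e" "0 \<le> i" "i < e" and B: "bracketed B L U"
  shows "bracketed (runner e B i) (- \<bar>L\<bar>) \<bar>U\<bar>"
  unfolding runner_eq_preimage[OF e] bracketed_def
proof safe
  fix c assume c: "c < - \<bar>L\<bar>"
  have "e * (c + 1) \<le> 1 * (c + 1)" using mult_right_mono_neg[of 1 e "c + 1"] c e(1) by simp
  then have "c * e + i < L" using c e by (simp add: algebra_simps)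
  then show "c * e + i \<in> B" using B unfolding bracketed_def by auto
next
  fix c assume "c * e + i \<in> B"
  then have "c * e + i < U" using B unfolding bracketed_def by auto
  moreover have "c \<le> c * e" if "0 \<le> c" using that e(1) mult_left_mono[of 1 e c] by simp
  ultimately show "c < \<bar>U\<bar>" using e(2) by (cases "0 \<le> c") auto
qed

lemma bracketed_of_runners:
  assumes e: "0 < e" and runners: "\<forall>i\<in>{0..<e}. bracketed (runner e B i) L U"
  shows "bracketed B (L * e) (U * e)"
  unfolding bracketed_def
proof safe
  fix y
  define c where "c = y div e"
  define i where "i = y mod e"
  have i: "0 \<le> i" "i < e" using e unfolding i_def by auto
  have y: "y = c * e + i" unfolding c_def i_def by simp
  have runner: "bracketed {c. c * e + i \<in> B} L U"
    using runners i runner_eq_preimage[OF e i, of B] by (metis atLeastLessThan_iff)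
  {
    assume "y < L * e"
    then have "c * e < L * e" using i y by linarith
    then have "c < L" using e by (simp add: mult_less_cancel_right)
    then show "y \<in> B" using runner y unfolding bracketed_def by auto
  next
    assume "y \<in> B"
    then have "c + 1 \<le> U" using runner y unfolding bracketed_def by auto
    then have "(c + 1) * e \<le> U * e" using e by (simp add: mult_right_mono)
    then show "y < U * e" using y i by (simp add: algebra_simps)
  }
qed

definition uglov_set :: "int \<Rightarrow> nat \<Rightarrow> (nat \<Rightarrow> nat list) \<Rightarrow> (nat \<Rightarrow> int) \<Rightarrow> int set" where
  "uglov_set e r lam s = (\<Union>k\<in>{1..r}. uglov_psi e r k ` beta_set (lam k) (s k))"

lemma Uglov_Psi_eq_config_of: "Uglov_Psi e r lam s = config_of (uglov_set e r lam s)"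
  unfolding Uglov_Psi_def uglov_set_def ..

lemma runner_uglov_set:
  assumes e: "0 < e" "0 \<le> i" "i < e"
  shows "runner e (uglov_set e r lam s) i = interleave r (\<lambda>k. runner e (beta_set (lam k) (s k)) i)"
proof -
  have psi: "uglov_psi e r k b = interleave_pos r k (b div e) * e + b mod e" for k b
    unfolding uglov_psi_def interleave_pos_def by simp
  have "c' * e + i \<in> uglov_set e r lam s \<longleftrightarrow>
      (\<exists>k\<in>{1..r}. \<exists>c. c * e + i \<in> beta_set (lam k) (s k) \<and> c' = interleave_pos r k c)" for c'
  proof
    assume "c' * e + i \<in> uglov_set e r lam s"
    then obtain k b where kb: "k \<in> {1..r}" "b \<in> beta_set (lam k) (s k)"
      "c' * e + i = interleave_pos r k (b div e) * e + b mod e"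
      unfolding uglov_set_def psi by auto
    moreover have "(c' * e + i) div e = c'" "(c' * e + i) mod e = i" using e by simp_all
    moreover have "(P * e + b mod e) div e = P" "(P * e + b mod e) mod e = b mod e" for P
      using e by simp_all
    ultimately have "c' = interleave_pos r k (b div e) \<and> i = b mod e" by metis
    then show "\<exists>k\<in>{1..r}. \<exists>c. c * e + i \<in> beta_set (lam k) (s k) \<and> c' = interleave_pos r k c"
      using kb by (metis div_mult_mod_eq)
  next
    assume "\<exists>k\<in>{1..r}. \<exists>c. c * e + i \<in> beta_set (lam k) (s k) \<and> c' = interleave_pos r k c"
    then obtain k c where kc: "k \<in> {1..r}" "c * e + i \<in> beta_set (lam k) (s k)" "c' = interleave_pos r k c"
      by auto
    have "uglov_psi e r k (c * e + i) = c' * e + i" using e kc(3) by (simp add: psi)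
    then show "c' * e + i \<in> uglov_set e r lam s" using kc unfolding uglov_set_def by force
  qed
  then show ?thesis unfolding runner_eq_preimage[OF e] interleave_def by auto
qed

lemma eta_beta_set:
  assumes "0 < e" "is_partition l" "n < nat e"
  shows "is_partition (fst (eta e l s n))
    \<and> runner e (beta_set l s) (int n) = beta_set (fst (eta e l s n)) (snd (eta e l s n))"
  using config_of_bracketed[OF bracketed_runner[OF assms(1) _ _ bracketed_beta_set[OF assms(2)]]] assms
  unfolding eta_def by simp

lemma bracketed_uglov_set:
  assumes e: "0 < e" and r: "1 \<le> r" and lam: "\<forall>k\<in>{1..r}. is_partition (lam k)"
  shows "\<exists>L U. bracketed (uglov_set e r lam s) L U"
proof -
  obtain L U where "\<forall>k\<in>{1..r}. bracketed (beta_set (lam k) (s k)) L U"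
    using bracketed_uniform[of "{1..r}" "\<lambda>k. beta_set (lam k) (s k)"] lam bracketed_beta_set by force
  then have "bracketed (interleave r (\<lambda>k. runner e (beta_set (lam k) (s k)) i)) (- \<bar>L\<bar> * int r) (\<bar>U\<bar> * int r)"
    if "i \<in> {0..<e}" for i
    using that e by (intro bracketed_interleave[OF r] ballI bracketed_runner) auto
  then have "bracketed (runner e (uglov_set e r lam s) i) (- \<bar>L\<bar> * int r) (\<bar>U\<bar> * int r)"
    if "i \<in> {0..<e}" for i
    using that e by (simp add: runner_uglov_set)
  then show ?thesis using bracketed_of_runners[OF e] by blast
qed

lemma eta_Uglov_Psi:
  fixes s :: "nat \<Rightarrow> int"
  assumes e: "0 < e" and r: "1 \<le> r" and lam: "\<forall>k\<in>{1..r}. is_partition (lam k)" and n: "n < nat e"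
  defines "\<Psi> \<equiv> Uglov_Psi e r lam s"
  shows "is_partition (fst (eta e (fst \<Psi>) (snd \<Psi>) n))
    \<and> interleave r (\<lambda>k. runner e (beta_set (lam k) (s k)) (int n))
      = beta_set (fst (eta e (fst \<Psi>) (snd \<Psi>) n)) (snd (eta e (fst \<Psi>) (snd \<Psi>) n))"
proof -
  obtain L U where "bracketed (uglov_set e r lam s) L U" using bracketed_uglov_set[OF e r lam] by blast
  then have "is_partition (fst \<Psi>) \<and> uglov_set e r lam s = beta_set (fst \<Psi>) (snd \<Psi>)"
    unfolding \<Psi>_def Uglov_Psi_eq_config_of by (rule config_of_bracketed)
  then show ?thesis
    using eta_beta_set[OF e _ n, of "fst \<Psi>" "snd \<Psi>"] runner_uglov_set[of e "int n" r lam s] e n by simp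
qed

lemma charge_eta_Uglov_Psi:
  fixes s :: "nat \<Rightarrow> int"
  assumes e: "0 < e" and r: "1 \<le> r" and lam: "\<forall>k\<in>{1..r}. is_partition (lam k)" and n: "n < nat e"
  defines "\<Psi> \<equiv> Uglov_Psi e r lam s"
  shows "snd (eta e (fst \<Psi>) (snd \<Psi>) n) = (\<Sum>k\<in>{1..r}. snd (eta e (lam k) (s k) n))"
proof -
  have components: "\<forall>k\<in>{1..r}. is_partition (fst (eta e (lam k) (s k) n))"
    "\<forall>k\<in>{1..r}. runner e (beta_set (lam k) (s k)) (int n)
       = beta_set (fst (eta e (lam k) (s k) n)) (snd (eta e (lam k) (s k) n))"
    using eta_beta_set[OF e _ n] lam by simp_all
  note \<Psi> = eta_Uglov_Psi[OF e r lam n, of s, folded \<Psi>_def]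
  show ?thesis by (rule charge_interleave[OF r components conjunct1[OF \<Psi>] conjunct2[OF \<Psi>]])
qed

lemma size_eta_Uglov_Psi_ge:
  fixes s :: "nat \<Rightarrow> int"
  assumes e: "0 < e" and r: "1 \<le> r" and lam: "\<forall>k\<in>{1..r}. is_partition (lam k)" and n: "n < nat e"
    and k: "k \<in> {1..r}"
  defines "\<Psi> \<equiv> Uglov_Psi e r lam s" and "t \<equiv> \<lambda>j. snd (eta e (lam j) (s j) n)"
  shows "2 * int r * int (size_part (fst (eta e (lam k) (s k) n)))
      + (\<Sum>j\<in>{1..r} - {k}. pronic (if j < k then t j - t k else t k - t j))
    \<le> 2 * int (size_part (fst (eta e (fst \<Psi>) (snd \<Psi>) n)))"
proof -
  have components: "\<forall>k\<in>{1..r}. is_partition (fst (eta e (lam k) (s k) n))"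
    "\<forall>k\<in>{1..r}. runner e (beta_set (lam k) (s k)) (int n)
       = beta_set (fst (eta e (lam k) (s k) n)) (t k)"
    using eta_beta_set[OF e _ n] lam unfolding t_def by simp_all
  note \<Psi> = eta_Uglov_Psi[OF e r lam n, of s, folded \<Psi>_def]
  show ?thesis by (rule size_interleave_ge[OF r components conjunct1[OF \<Psi>] conjunct2[OF \<Psi>] k])
qed

lemma pronic_gap_pair_ge:
  fixes a b a' b' :: int
  shows "2 * ((b - a) - (b' - a')) - 2
    \<le> pronic (if P then a - a' else a' - a) + pronic (if P then b - b' else b' - b)"
  using pronic_sum_ge[where z = "a - a'" and w = "b - b'"] pronic_sum_ge[where z = "b' - b" and w = "a' - a"]
  by (cases P) (simp_all add: algebra_simps)

lemma weight_Uglov_Psi_ge: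
  fixes s :: "nat \<Rightarrow> int"
  assumes e: "0 < e" and r: "1 \<le> r" and lam: "\<forall>k\<in>{1..r}. is_partition (lam k)"
    and k: "k \<in> {1..r}" and i: "i + 1 < nat e"
  defines "\<Psi> \<equiv> Uglov_Psi e r lam s"
    and "t \<equiv> \<lambda>j n. snd (eta e (lam j) (s j) n)"
  shows "int r * int (weight e (lam k) (s k))
      + (snd (eta e (fst \<Psi>) (snd \<Psi>) (i + 1)) - snd (eta e (fst \<Psi>) (snd \<Psi>) i))
      - int r * (t k (i + 1) - t k i) - (int r - 1)
    \<le> int (weight e (fst \<Psi>) (snd \<Psi>))"
proof -
  define J where "J = {1..r} - {k}"
  define Q where "Q n = (\<Sum>j\<in>J. pronic (if j < k then t j n - t k n else t k n - t j n))" for n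
  have "(\<Sum>n<nat e. 2 * int r * int (size_part (fst (eta e (lam k) (s k) n))) + Q n)
      \<le> (\<Sum>n<nat e. 2 * int (size_part (fst (eta e (fst \<Psi>) (snd \<Psi>) n))))"
    using size_eta_Uglov_Psi_ge[OF e r lam _ k, of _ s] unfolding Q_def J_def t_def \<Psi>_def
    by (intro sum_mono) simp
  then have weights: "2 * int r * int (weight e (lam k) (s k)) + (\<Sum>n<nat e. Q n)
      \<le> 2 * int (weight e (fst \<Psi>) (snd \<Psi>))"
    unfolding weight_def by (simp add: sum.distrib sum_distrib_left of_nat_sum)
  have "(\<Sum>n\<in>{i, i + 1}. Q n) \<le> (\<Sum>n<nat e. Q n)"
    using i pronic_nonneg unfolding Q_def by (intro sum_mono2) (auto intro: sum_nonneg)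
  moreover have "(\<Sum>j\<in>J. 2 * ((t j (i + 1) - t j i) - (t k (i + 1) - t k i)) - 2) \<le> Q i + Q (i + 1)"
    unfolding Q_def sum.distrib[symmetric] by (intro sum_mono pronic_gap_pair_ge)
  moreover have "snd (eta e (fst \<Psi>) (snd \<Psi>) (i + 1)) - snd (eta e (fst \<Psi>) (snd \<Psi>) i)
      = (\<Sum>j\<in>{1..r}. t j (i + 1) - t j i)"
    using charge_eta_Uglov_Psi[OF e r lam] i unfolding t_def \<Psi>_def by (simp add: sum_subtractf)
  moreover have "(\<Sum>j\<in>{1..r}. t j (i + 1) - t j i) = (t k (i + 1) - t k i) + (\<Sum>j\<in>J. t j (i + 1) - t j i)"
    unfolding J_def using k by (simp add: sum.remove)
  moreover have "int (card J) = int r - 1" unfolding J_def using k by simp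
  ultimately show ?thesis
    using weights by (simp add: sum_subtractf sum.distrib sum_distrib_left[symmetric] algebra_simps)
qed

theorem lemma3p3:
  fixes e :: int and r :: nat
    and lam :: "nat \<Rightarrow> nat list" and s :: "nat \<Rightarrow> int"
  assumes "e \<ge> 2" and "r \<ge> 1"
    and "\<forall>k\<in>{1..r}. is_partition (lam k)"
    and "\<not> rouquier_multi e r lam s"
  shows "\<not> r_rouquier e (int r) (fst (Uglov_Psi e r lam s)) (snd (Uglov_Psi e r lam s))"
proof
  define \<Psi> where "\<Psi> = Uglov_Psi e r lam s"
  assume Rouquier_\<Psi>: "r_rouquier e (int r) (fst \<Psi>) (snd \<Psi>)"
  obtain k i where k: "k \<in> {1..r}" and i: "i + 1 < nat e"
    and gap: "snd (eta e (lam k) (s k) (i + 1)) - snd (eta e (lam k) (s k) i) + 2 \<le> int (weight e (lam k) (s k))"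
    using assms(4) unfolding rouquier_multi_def rouquier_def r_rouquier_def by fastforce
  have "int (weight e (fst \<Psi>) (snd \<Psi>))
      \<le> snd (eta e (fst \<Psi>) (snd \<Psi>) (i + 1)) - snd (eta e (fst \<Psi>) (snd \<Psi>) i) + int r"
    using Rouquier_\<Psi> i unfolding r_rouquier_def by blast
  moreover have "int r * (snd (eta e (lam k) (s k) (i + 1)) - snd (eta e (lam k) (s k) i) + 2)
      \<le> int r * int (weight e (lam k) (s k))"
    using gap by (simp add: mult_left_mono)
  ultimately show False
    using weight_Uglov_Psi_ge[OF _ assms(2,3) k i, of s] assms(1) unfolding \<Psi>_def
    by (simp add: algebra_simps)
qed

end
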